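(* Let $T=(T_a,T_b)$ be a rooted binary tree on $n$ leaves with minimal Colless index, where $T_a,T_b$ have $n_a\geq n_b$ leaves. Let $T_n^{gfb}=(T_a^{gfb},T_b^{gfb})$ with $n_a^{gfb}\geq n_b^{gfb}$ leaves and $T_n^{mb}=(T_a^{mb},T_b^{mb})$ with $n_a^{mb}\geq n_b^{mb}$ leaves. Then $$n_a^{gfb}\geq n_a\geq n_a^{mb}\quad\text{and}\quad n_b^{gfb}\leq n_b\leq n_b^{mb}.$$
   Context: A rooted binary tree with $n\geq 2$ leaves is a rooted tree whose root has degree 2 and all other internal nodes have degree 3; for $n=1$ it is a single node. Trees are up to isomorphism. $T=(T_a,T_b)$ denotes the decomposition into the subtrees rooted at the children of the root. For an internal node $v$ with children $v_1,v_2$, let $\kappa(v_i)$ be the number of leaves descending from $v_i$ ($1$ if a leaf) and $bal(v)=|\kappa(v_1)-\kappa(v_2)|$. The Colless index is $\mathcal{C}(T)=\sum_v bal(v)$ over internal nodes; minimal means minimal among rooted binary trees with $n$ leaves. $T_n^{mb}$ is the unique tree with $n$ leaves having $bal(v)\leq1$ at every internal node (maximally balanced tree). The GFB tree $T_n^{gfb}$ is the output of: start with $n$ single-node trees; while more than one tree remains, remove a tree $u$ of minimal size (number of leaves), then remove a tree $v$ of minimal size among the remaining ones, and insert the tree with a new root whose children are the roots of $u$ and $v$; output the remaining tree. *)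

theory Defs
  imports Main "HOL-Library.Multiset"
begin

text \<open>Rooted binary trees as plane trees; isomorphism (swapping children) does not
  affect leaf counts or the Colless index, so all notions below are isomorphism-invariant.\<close>
datatype btree = Leaf | Node btree btree

fun leaves :: "btree \<Rightarrow> nat" where
  "leaves Leaf = 1"
| "leaves (Node l r) = leaves l + leaves r"

definition bal_of :: "btree \<Rightarrow> btree \<Rightarrow> nat" where
  "bal_of l r = nat \<bar>int (leaves l) - int (leaves r)\<bar>"

fun colless :: "btree \<Rightarrow> nat" where
  "colless Leaf = 0"
| "colless (Node l r) = bal_of l r + colless l + colless r"

definition colless_minimal :: "btree \<Rightarrow> bool" where
  "colless_minimal T \<longleftrightarrow> (\<forall>T'. leaves T' = leaves T \<longrightarrow> colless T \<le> colless T')"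

fun max_balanced :: "btree \<Rightarrow> bool" where
  "max_balanced Leaf = True"
| "max_balanced (Node l r) = (bal_of l r \<le> 1 \<and> max_balanced l \<and> max_balanced r)"

inductive gfb_step :: "btree multiset \<Rightarrow> btree multiset \<Rightarrow> bool" where
  "u \<in># M \<Longrightarrow> (\<forall>w\<in>#M. leaves u \<le> leaves w) \<Longrightarrow>
   v \<in># M - {#u#} \<Longrightarrow> (\<forall>w\<in># M - {#u#}. leaves v \<le> leaves w) \<Longrightarrow>
   gfb_step M (M - {#u#} - {#v#} + {#Node u v#})"

definition gfb_tree :: "nat \<Rightarrow> btree \<Rightarrow> bool" where
  "gfb_tree n T \<longleftrightarrow> gfb_step\<^sup>*\<^sup>* (replicate_mset n Leaf) {#T#}"

end

theory Submission
  imports Defs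
begin

text \<open>Write \<open>c(n)\<close> for the least Colless index of a tree with \<open>n\<close> leaves; it obeys
  \<open>c(n) = c(\<lceil>n/2\<rceil>) + c(\<lfloor>n/2\<rfloor>) + (n mod 2)\<close>. GFB keeps the leaf counts of its forest
  within a factor two of each other, all but at most one of them powers of two; so its root
  subtrees have sizes \<open>x \<ge> y\<close> with \<open>x \<le> 2y\<close> and \<open>x\<close> or \<open>y\<close> a power of two, which forces
  \<open>y = m(n)\<close> for a function \<open>m\<close> with a halving recursion and closed form
  \<open>m(2^(q+1) + r) = max 2^q r\<close>. Halving \<open>a\<close> and \<open>b\<close> simultaneously proves
  \<open>c(a + b) + m(a + b) \<le> c(a) + c(b) + a\<close> for \<open>b \<le> a\<close>. A Colless-minimal tree with root
  subtrees of sizes \<open>a \<ge> b\<close> has \<open>c(a + b) \<ge> (a - b) + c(a) + c(b)\<close>, hence \<open>m(n) \<le> b\<close>.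
  The maximally balanced tree splits \<open>n\<close> into \<open>\<lceil>n/2\<rceil>\<close> and \<open>\<lfloor>n/2\<rfloor>\<close>, the most even split.\<close>

section \<open>Halving induction\<close>

lemma nat_halving_induct [case_names 0 1 double odd]:
  fixes n :: nat
  assumes "P 0" "P 1"
    and "\<And>m. 1 \<le> m \<Longrightarrow> P m \<Longrightarrow> P (2 * m)"
    and "\<And>m. 1 \<le> m \<Longrightarrow> P m \<Longrightarrow> P (m + 1) \<Longrightarrow> P (2 * m + 1)"
  shows "P n"
proof (induction n rule: less_induct)
  case (less n)
  consider "n \<le> 1" | "2 \<le> n" "n = 2 * (n div 2)" | "2 \<le> n" "n = 2 * (n div 2) + 1"
    by linarith
  then show ?case
  proof cases
    case 1
    then show ?thesis using assms(1,2) by (cases n) auto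
  next
    case 2
    then show ?thesis using assms(3)[of "n div 2"] less[of "n div 2"] by simp
  next
    case 3
    then show ?thesis using assms(4)[of "n div 2"] less[of "n div 2"] less[of "n div 2 + 1"] by simp
  qed
qed

lemma pair_halving_induct
    [consumes 1, case_names zero one diag double_double odd_double double_odd odd_odd]:
  fixes a b :: nat
  assumes "b \<le> a"
    and "\<And>a. P a 0" and "\<And>a. 1 \<le> a \<Longrightarrow> P a 1" and "\<And>a. P a a"
    and "\<And>a b. 1 \<le> b \<Longrightarrow> b \<le> a \<Longrightarrow> P a b \<Longrightarrow> P (2 * a) (2 * b)"
    and "\<And>a b. 1 \<le> b \<Longrightarrow> b \<le> a \<Longrightarrow> P a b \<Longrightarrow> P (a + 1) b \<Longrightarrow> P (2 * a + 1) (2 * b)"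
    and "\<And>a b. 1 \<le> b \<Longrightarrow> b < a \<Longrightarrow> P a b \<Longrightarrow> P a (b + 1) \<Longrightarrow> P (2 * a) (2 * b + 1)"
    and "\<And>a b. 1 \<le> b \<Longrightarrow> b < a \<Longrightarrow> P (a + 1) b \<Longrightarrow> P a (b + 1) \<Longrightarrow> P (2 * a + 1) (2 * b + 1)"
  shows "P a b"
  using assms(1)
proof (induction "a + b" arbitrary: a b rule: less_induct)
  case less
  consider "b = 0" | "b = 1" | "b = a" | (step) "2 \<le> b" "b < a"
    using less.prems by linarith
  then show ?case
  proof cases
    case step
    have IH: "P a' b'" if "a' + b' < a + b" "b' \<le> a'" for a' b'
      using less.hyps that by blast
    consider (ee) "even a" "even b" | (oe) "odd a" "even b" | (eo) "even a" "odd b"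
      | (oo) "odd a" "odd b"
      by blast
    then show ?thesis
    proof cases
      case ee
      then obtain a' b' where "a = 2 * a'" "b = 2 * b'" by (auto elim!: evenE)
      then show ?thesis using assms(5)[of b' a'] IH[of a' b'] step by simp
    next
      case oe
      then obtain a' b' where "a = 2 * a' + 1" "b = 2 * b'" by (auto elim!: evenE oddE)
      then show ?thesis using assms(6)[of b' a'] IH[of a' b'] IH[of "a' + 1" b'] step by simp
    next
      case eo
      then obtain a' b' where "a = 2 * a'" "b = 2 * b' + 1" by (auto elim!: evenE oddE)
      then show ?thesis using assms(7)[of b' a'] IH[of a' b'] IH[of a' "b' + 1"] step by simp
    next
      case oo
      then obtain a' b' where "a = 2 * a' + 1" "b = 2 * b' + 1" by (auto elim!: oddE)
      then show ?thesis using assms(8)[of b' a'] IH[of "a' + 1" b'] IH[of a' "b' + 1"] step by simp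
    qed
  qed (use assms(2-4) less.prems in auto)
qed

section \<open>Two halving recursions\<close>

function min_colless :: "nat \<Rightarrow> nat" where
  "min_colless n = (if n \<le> 1 then 0 else if even n then 2 * min_colless (n div 2)
     else min_colless (n div 2) + min_colless (n div 2 + 1) + 1)"
  by auto
termination by (relation "measure id") (auto elim!: oddE)

declare min_colless.simps [simp del]

lemma min_colless_0 [simp]: "min_colless 0 = 0"
  and min_colless_1 [simp]: "min_colless (Suc 0) = 0"
  by (simp_all add: min_colless.simps)

lemma min_colless_double: "min_colless (2 * m) = 2 * min_colless m"
  by (cases "m = 0") (simp_all add: min_colless.simps[of "2 * m"])

lemma min_colless_odd:
  "1 \<le> m \<Longrightarrow> min_colless (2 * m + 1) = min_colless m + min_colless (m + 1) + 1"
  by (subst min_colless.simps) simp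

function gfb_minor :: "nat \<Rightarrow> nat" where
  "gfb_minor n = (if n \<le> 1 then 0 else if n \<le> 3 then 1 else if even n then 2 * gfb_minor (n div 2)
     else gfb_minor (n div 2) + gfb_minor (n div 2 + 1))"
  by auto
termination by (relation "measure id") (auto elim!: oddE)

declare gfb_minor.simps [simp del]

lemma gfb_minor_0 [simp]: "gfb_minor 0 = 0"
  and gfb_minor_1 [simp]: "gfb_minor (Suc 0) = 0"
  and gfb_minor_2 [simp]: "gfb_minor 2 = 1"
  and gfb_minor_3 [simp]: "gfb_minor 3 = 1"
  by (simp_all add: gfb_minor.simps)

lemma gfb_minor_double: "2 \<le> m \<Longrightarrow> gfb_minor (2 * m) = 2 * gfb_minor m"
  by (subst gfb_minor.simps) simp

lemma gfb_minor_odd: "2 \<le> m \<Longrightarrow> gfb_minor (2 * m + 1) = gfb_minor m + gfb_minor (m + 1)"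
  by (subst gfb_minor.simps) simp

lemma gfb_minor_le_half: "gfb_minor n \<le> n div 2"
proof (induction n rule: nat_halving_induct)
  case (double m)
  then show ?case by (cases "m = 1") (simp_all add: gfb_minor_double)
next
  case (odd m)
  have "m div 2 + (m + 1) div 2 = m" by presburger
  with odd show ?case using gfb_minor_odd[of m] by (cases "m = 1") simp_all
qed simp_all

lemma gfb_minor_less: "1 \<le> n \<Longrightarrow> gfb_minor n < n"
  using gfb_minor_le_half[of n] by linarith

lemma gfb_minor_pos: "2 \<le> n \<Longrightarrow> 1 \<le> gfb_minor n"
proof (induction n rule: nat_halving_induct)
  case (double m)
  then show ?case by (cases "m = 1") (simp_all add: gfb_minor_double)
next
  case (odd m)
  then consider "m = 1" | "2 \<le> m" by linarith
  then show ?case using odd gfb_minor_odd[of m] by cases simp_all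
qed simp_all

lemma min_colless_add_one_le:
  "1 \<le> a \<Longrightarrow> min_colless (a + 1) + gfb_minor (a + 1) \<le> min_colless a + a"
proof (induction a rule: nat_halving_induct)
  case 1
  then show ?case by (simp add: min_colless.simps gfb_minor.simps)
next
  case (double m)
  have "1 + gfb_minor (2 * m + 1) \<le> gfb_minor (m + 1) + m"
  proof (cases "m = 1")
    case False
    then show ?thesis using double gfb_minor_less[of m] gfb_minor_odd[of m] by simp
  qed (simp add: gfb_minor.simps)
  then show ?case using double min_colless_odd[of m] by (simp add: min_colless_double)
next
  case (odd m)
  have "min_colless (2 * m + 1 + 1) = 2 * min_colless (m + 1)"
    using min_colless_double[of "m + 1"] by simp
  moreover have "gfb_minor (2 * m + 1 + 1) = 2 * gfb_minor (m + 1)"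
    using gfb_minor_double[of "m + 1"] odd.hyps by simp
  ultimately show ?case
    using odd.IH(1) odd.hyps min_colless_odd[of m] gfb_minor_less[of "m + 1"] by linarith
qed simp

lemma min_colless_add_le:
  "b \<le> a \<Longrightarrow> min_colless (a + b) + b \<le> min_colless a + min_colless b + a"
proof (induction a b rule: pair_halving_induct)
  case (one a)
  then show ?case using min_colless_add_one_le[of a] gfb_minor_pos[of "a + 1"] by simp
next
  case (diag a)
  then show ?case using min_colless_double[of a] by (simp add: mult_2)
next
  case (double_double a b)
  then show ?case using min_colless_double[of "a + b"] by (simp add: min_colless_double)
next
  case (odd_double a b)
  then show ?case using min_colless_odd[of "a + b"] min_colless_odd[of a]
    by (simp add: min_colless_double)
next
  case (double_odd a b)
  then show ?case using min_colless_odd[of "a + b"] min_colless_odd[of b]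
    by (simp add: min_colless_double)
next
  case (odd_odd a b)
  then show ?case using min_colless_double[of "a + b + 1"] min_colless_odd[of a] min_colless_odd[of b]
    by simp
qed simp

lemma min_colless_add_gfb_minor_le:
  "b \<le> a \<Longrightarrow> min_colless (a + b) + gfb_minor (a + b) \<le> min_colless a + min_colless b + a"
proof (induction a b rule: pair_halving_induct)
  case (zero a)
  then show ?case using gfb_minor_le_half[of a] by simp
next
  case (one a)
  then show ?case using min_colless_add_one_le[of a] by simp
next
  case (diag a)
  then show ?case using min_colless_double[of a] gfb_minor_le_half[of "2 * a"] by (simp add: mult_2)
next
  case (double_double a b)
  then show ?case using min_colless_double[of "a + b"] gfb_minor_double[of "a + b"]
    by (simp add: min_colless_double)
next
  case (odd_double a b)
  then show ?case using min_colless_odd[of "a + b"] min_colless_odd[of a] gfb_minor_odd[of "a + b"]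
    by (simp add: min_colless_double)
next
  case (double_odd a b)
  then show ?case using min_colless_odd[of "a + b"] min_colless_odd[of b] gfb_minor_odd[of "a + b"]
    by (simp add: min_colless_double)
next
  case (odd_odd a b)
  then show ?case using min_colless_double[of "a + b + 1"] gfb_minor_double[of "a + b + 1"]
      min_colless_odd[of a] min_colless_odd[of b]
    by simp
qed

section \<open>Colless-minimal trees\<close>

lemma leaves_pos: "0 < leaves t"
  by (induction t) auto

lemma bal_of_eq_diff: "leaves r \<le> leaves l \<Longrightarrow> bal_of l r = leaves l - leaves r"
  by (simp add: bal_of_def)

lemma colless_Node_eq_diff:
  "leaves r \<le> leaves l \<Longrightarrow> colless (Node l r) = leaves l - leaves r + colless l + colless r"
  by (simp add: bal_of_eq_diff)

lemma min_colless_le_colless: "min_colless (leaves t) \<le> colless t"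
proof (induction t)
  case (Node l r)
  show ?case
  proof (cases "leaves r \<le> leaves l")
    case True
    then show ?thesis using Node min_colless_add_le[of "leaves r" "leaves l"] colless_Node_eq_diff
      by simp
  next
    case False
    then show ?thesis using Node min_colless_add_le[of "leaves l" "leaves r"]
      by (simp add: bal_of_def add.commute)
  qed
qed simp

lemma min_colless_attained: "1 \<le> n \<Longrightarrow> \<exists>t. leaves t = n \<and> colless t = min_colless n"
proof (induction n rule: nat_halving_induct)
  case 1
  then show ?case by (intro exI[of _ Leaf]) simp
next
  case (double m)
  then obtain t where "leaves t = m" "colless t = min_colless m" by auto
  then show ?case by (intro exI[of _ "Node t t"]) (simp add: bal_of_def min_colless_double)
next
  case (odd m)
  then obtain t t' where "leaves t = m" "colless t = min_colless m"
    and "leaves t' = m + 1" "colless t' = min_colless (m + 1)" by auto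
  then show ?case using odd min_colless_odd[of m]
    by (intro exI[of _ "Node t' t"]) (simp add: bal_of_eq_diff)
qed simp

lemma colless_minimal_iff: "colless_minimal t \<longleftrightarrow> colless t = min_colless (leaves t)"
proof
  assume "colless_minimal t"
  moreover obtain t' where "leaves t' = leaves t" "colless t' = min_colless (leaves t)"
    using min_colless_attained[of "leaves t"] leaves_pos[of t] by auto
  ultimately show "colless t = min_colless (leaves t)"
    using min_colless_le_colless[of t] unfolding colless_minimal_def by fastforce
next
  assume "colless t = min_colless (leaves t)"
  then show "colless_minimal t"
    unfolding colless_minimal_def by (metis min_colless_le_colless)
qed

lemma colless_minimal_gfb_minor_le:
  assumes "colless_minimal (Node l r)" and "leaves r \<le> leaves l"
  shows "gfb_minor (leaves (Node l r)) \<le> leaves r"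
proof -
  have "min_colless (leaves l + leaves r) = leaves l - leaves r + colless l + colless r"
    using assms colless_Node_eq_diff colless_minimal_iff by (metis leaves.simps(2))
  moreover have "min_colless (leaves l) \<le> colless l" "min_colless (leaves r) \<le> colless r"
    by (fact min_colless_le_colless)+
  ultimately show ?thesis
    using min_colless_add_gfb_minor_le[OF assms(2)] assms(2) by simp
qed

section \<open>The greedy-from-the-bottom tree\<close>

definition is_power_of_two :: "nat \<Rightarrow> bool" where
  "is_power_of_two k \<longleftrightarrow> (\<exists>i. k = 2 ^ i)"

lemma is_power_of_two_double: "is_power_of_two x \<Longrightarrow> is_power_of_two (x + x)"
  unfolding is_power_of_two_def by (metis mult_2 power_Suc)

lemma is_power_of_two_le_double:
  assumes "is_power_of_two x" "is_power_of_two y" "x \<le> y" "y \<le> 2 * x"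
  shows "y = x \<or> y = 2 * x"
proof -
  obtain i j where x: "x = 2 ^ i" and y: "y = 2 ^ j"
    using assms(1,2) unfolding is_power_of_two_def by blast
  have "2 ^ j \<le> (2::nat) ^ Suc i" using assms(4) x y by simp
  then have "j \<le> Suc i" using power_increasing_iff[of "2::nat" j "Suc i"] by simp
  moreover have "i \<le> j" using assms(3) x y by simp
  ultimately have "j = i \<or> j = Suc i" by linarith
  then show ?thesis using x y by auto
qed

lemma gfb_minor_two_power_add:
  "r \<le> 2 ^ Suc q \<Longrightarrow> gfb_minor (2 ^ Suc q + r) = max (2 ^ q) r"
proof (induction q arbitrary: r)
  case 0
  then consider "r = 0" | "r = 1" | "r = 2" by fastforce
  then show ?case using gfb_minor_double[of 2] by cases simp_all
next
  case (Suc q)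
  have "(2::nat) \<le> 2 ^ Suc q" by simp
  then have two_le: "2 \<le> 2 ^ Suc q + s" for s :: nat by linarith
  obtain s where "r = 2 * s \<or> r = 2 * s + 1" by (metis oddE evenE)
  then show ?case
  proof
    assume r: "r = 2 * s"
    then have "gfb_minor (2 ^ Suc (Suc q) + r) = 2 * gfb_minor (2 ^ Suc q + s)"
      using gfb_minor_double[of "2 ^ Suc q + s"] two_le by simp
    then show ?case using Suc r by simp
  next
    assume r: "r = 2 * s + 1"
    then have "gfb_minor (2 ^ Suc (Suc q) + r)
        = gfb_minor (2 ^ Suc q + s) + gfb_minor (2 ^ Suc q + (s + 1))"
      using gfb_minor_odd[of "2 ^ Suc q + s"] two_le by simp
    then show ?case using Suc.IH[of s] Suc.IH[of "s + 1"] Suc.prems r by simp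
  qed
qed

lemma gfb_minor_eq:
  assumes "y \<le> x" "x \<le> 2 * y" "is_power_of_two x \<or> is_power_of_two y"
  shows "gfb_minor (x + y) = y"
  using assms(3)
proof
  assume "is_power_of_two y"
  then obtain q where "y = 2 ^ q" unfolding is_power_of_two_def by blast
  then have "gfb_minor (x + y) = max (2 ^ q) (x - y)"
    using assms(1,2) gfb_minor_two_power_add[of "x - y" q] by (simp add: add.commute)
  then show ?thesis using \<open>y = 2 ^ q\<close> assms(2) by simp
next
  assume "is_power_of_two x"
  then obtain q where x: "x = 2 ^ q" unfolding is_power_of_two_def by blast
  show ?thesis
  proof (cases q)
    case 0
    then show ?thesis using x assms(1,2) by (simp add: gfb_minor.simps)
  next
    case (Suc p)
    then have "gfb_minor (x + y) = max (2 ^ p) y"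
      using x assms(1) gfb_minor_two_power_add[of y p] by simp
    then show ?thesis using x Suc assms(2) by simp
  qed
qed

lemma gfb_stepE:
  assumes "gfb_step M M'"
  obtains u v N where "M = add_mset u (add_mset v N)" "M' = add_mset (Node u v) N"
    and "leaves u \<le> leaves v" "\<forall>w\<in>#N. leaves v \<le> leaves w"
  using assms
proof cases
  case (1 u v)
  then obtain N where "M = add_mset u (add_mset v N)" by (metis insert_DiffM)
  with 1 show ?thesis using that[of u v N] by simp
qed

definition gfb_invariant :: "nat \<Rightarrow> btree multiset \<Rightarrow> bool" where
  "gfb_invariant n M \<longleftrightarrow> (\<Sum>t\<in>#M. leaves t) = n
     \<and> (\<forall>t\<in>#M. \<forall>t'\<in>#M. leaves t' \<le> 2 * leaves t)
     \<and> size (filter_mset (\<lambda>t. \<not> is_power_of_two (leaves t)) M) \<le> 1"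

lemma gfb_invariant_init: "gfb_invariant n (replicate_mset n Leaf)"
proof -
  have "is_power_of_two (leaves Leaf)" unfolding is_power_of_two_def by (metis leaves.simps(1) power_0)
  then have "filter_mset (\<lambda>t. \<not> is_power_of_two (leaves t)) (replicate_mset n Leaf) = {#}"
    by simp
  then show ?thesis unfolding gfb_invariant_def by (simp del: filter_mset_eq_mempty_iff)
qed

lemma gfb_step_ratio:
  assumes "\<forall>t\<in>#add_mset u (add_mset v N). \<forall>t'\<in>#add_mset u (add_mset v N). leaves t' \<le> 2 * leaves t"
    and "leaves u \<le> leaves v" "\<forall>w\<in>#N. leaves v \<le> leaves w"
  shows "\<forall>t\<in>#add_mset (Node u v) N. \<forall>t'\<in>#add_mset (Node u v) N. leaves t' \<le> 2 * leaves t"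
proof (intro ballI)
  fix t t' assume t: "t \<in># add_mset (Node u v) N" and t': "t' \<in># add_mset (Node u v) N"
  have "leaves v \<le> leaves w" "leaves w \<le> 2 * leaves u" if "w \<in># N" for w
    using assms that by simp_all
  with assms(1,2) t t' show "leaves t' \<le> 2 * leaves t"
    by (cases "t = Node u v"; cases "t' = Node u v") fastforce+
qed

lemma gfb_step_non_powers:
  assumes ratio: "\<forall>t\<in>#add_mset u (add_mset v N). \<forall>t'\<in>#add_mset u (add_mset v N). leaves t' \<le> 2 * leaves t"
    and uv: "leaves u \<le> leaves v" and vN: "\<forall>w\<in>#N. leaves v \<le> leaves w"
    and count: "size (filter_mset (\<lambda>t. \<not> is_power_of_two (leaves t)) (add_mset u (add_mset v N))) \<le> 1"
  shows "size (filter_mset (\<lambda>t. \<not> is_power_of_two (leaves t)) (add_mset (Node u v) N)) \<le> 1"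
proof (cases "is_power_of_two (leaves u) \<and> is_power_of_two (leaves v)
    \<and> \<not> is_power_of_two (leaves u + leaves v)")
  case True
  moreover have "leaves v \<le> 2 * leaves u" using ratio by simp
  ultimately have "leaves v = 2 * leaves u"
    using is_power_of_two_le_double[of "leaves u" "leaves v"] is_power_of_two_double uv by auto
  moreover have "leaves w \<le> 2 * leaves u" if "w \<in># N" for w using ratio that by simp
  ultimately have "\<forall>w\<in>#N. leaves w = leaves v" using vN by fastforce
  then have "filter_mset (\<lambda>t. \<not> is_power_of_two (leaves t)) N = {#}"
    using True by simp
  then show ?thesis by (simp del: filter_mset_eq_mempty_iff)
next
  case False
  then have "size (filter_mset (\<lambda>t. \<not> is_power_of_two (leaves t)) (add_mset (Node u v) N))
      \<le> size (filter_mset (\<lambda>t. \<not> is_power_of_two (leaves t)) (add_mset u (add_mset v N)))"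
    by (cases "is_power_of_two (leaves u + leaves v)") simp_all
  with count show ?thesis by linarith
qed

lemma gfb_step_invariant:
  assumes "gfb_step M M'" and "gfb_invariant n M"
  shows "gfb_invariant n M'"
proof -
  obtain u v N where M: "M = add_mset u (add_mset v N)" and M': "M' = add_mset (Node u v) N"
    and uv: "leaves u \<le> leaves v" and vN: "\<forall>w\<in>#N. leaves v \<le> leaves w"
    using assms(1) by (rule gfb_stepE)
  have "(\<Sum>t\<in>#M'. leaves t) = (\<Sum>t\<in>#M. leaves t)"
    unfolding M M' by simp
  moreover have "\<forall>t\<in>#M'. \<forall>t'\<in>#M'. leaves t' \<le> 2 * leaves t"
    using assms(2) gfb_step_ratio[OF _ uv vN] unfolding M M' gfb_invariant_def by blast
  moreover have "size (filter_mset (\<lambda>t. \<not> is_power_of_two (leaves t)) M') \<le> 1"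
    using assms(2) gfb_step_non_powers[OF _ uv vN] unfolding M M' gfb_invariant_def by blast
  ultimately show ?thesis
    using assms(2) unfolding gfb_invariant_def by blast
qed

lemma gfb_steps_invariant:
  "gfb_step\<^sup>*\<^sup>* M M' \<Longrightarrow> gfb_invariant n M \<Longrightarrow> gfb_invariant n M'"
  by (induction rule: rtranclp_induct) (auto intro: gfb_step_invariant)

lemma gfb_tree_root:
  assumes "gfb_tree n (Node l r)"
  shows "leaves l + leaves r = n \<and> leaves r \<le> 2 * leaves l \<and> leaves l \<le> 2 * leaves r
    \<and> (is_power_of_two (leaves l) \<or> is_power_of_two (leaves r))"
proof -
  have "gfb_step\<^sup>*\<^sup>* (replicate_mset n Leaf) {#Node l r#}"
    using assms unfolding gfb_tree_def .
  then show ?thesis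
  proof (cases rule: rtranclp.cases)
    case rtrancl_refl
    then have "Node l r \<in># replicate_mset n Leaf" by (metis union_single_eq_member)
    then show ?thesis by (simp split: if_splits)
  next
    case (rtrancl_into_rtrancl M)
    then have "gfb_invariant n M"
      using gfb_steps_invariant gfb_invariant_init by blast
    from \<open>gfb_step M {#Node l r#}\<close> show ?thesis
    proof (cases rule: gfb_stepE)
      case (1 u v N)
      then have "M = {#l, r#}" by auto
      with \<open>gfb_invariant n M\<close> show ?thesis unfolding gfb_invariant_def by (auto split: if_splits)
    qed
  qed
qed

lemma gfb_tree_minor:
  assumes "gfb_tree n (Node l r)" and "leaves r \<le> leaves l"
  shows "leaves r = gfb_minor n"
  using gfb_tree_root[OF assms(1)] gfb_minor_eq[OF assms(2)] by auto

theorem corollary2: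
  fixes Ta Tb Ga Gb Ma Mb :: btree and n :: nat
  assumes "leaves (Node Ta Tb) = n" and "colless_minimal (Node Ta Tb)"
    and "leaves Ta \<ge> leaves Tb"
    and "gfb_tree n (Node Ga Gb)" and "leaves Ga \<ge> leaves Gb"
    and "leaves (Node Ma Mb) = n" and "max_balanced (Node Ma Mb)"
    and "leaves Ma \<ge> leaves Mb"
  shows "leaves Ga \<ge> leaves Ta \<and> leaves Ta \<ge> leaves Ma \<and>
         leaves Gb \<le> leaves Tb \<and> leaves Tb \<le> leaves Mb"
proof -
  have "gfb_minor n \<le> leaves Tb"
    using colless_minimal_gfb_minor_le[OF assms(2,3)] assms(1) by simp
  moreover have "leaves Gb = gfb_minor n" and "leaves Ga + leaves Gb = n"
    using gfb_tree_minor[OF assms(4,5)] gfb_tree_root[OF assms(4)] by simp_all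
  moreover have "leaves Ma \<le> leaves Mb + 1"
    using assms(7,8) by (auto simp: bal_of_eq_diff)
  ultimately show ?thesis
    using assms(1,3,6) by simp
qed

end
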